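(* Under the standing assumptions below, let $k\in P$ and $x\in M_k$, and let $p:M\to\bigoplus_{i\in P}M_{\langle i\rangle}$ be any graded $R[U_0]$-homomorphism with $q\circ p=\mathrm{id}_M$. Then $x$ is decomposable (i.e. $x\in D_k$) if and only if $p(x)=\ell_1+\dots+\ell_r$ with $0\neq \ell_j\in M_{\langle s_j\rangle}$ and $s_j<k$ for all $j$ (that is, every nonzero component of $p(x)$ lies in a summand $M_{\langle s\rangle}$ with $s<k$).
   Context: Standing assumptions: $R$ is a principal ideal domain; $P$ is a lattice with a compatible abelian group structure ($(P,+,0)$ abelian group, $a\le b\Rightarrow a+c\le b+c$). $U_0=\{s\in P:s\ge 0\}$, $R[U_0]$ the monoid ring (finite sums $\sum c_st^s$, $c_s\in R$), graded by $\deg(ct^s)=s$. $M=\bigoplus_{a\in P}M_a$ is a $P$-graded $R[U_0]$-module that is graded projective, with each $M_a$ a finitely generated (hence free) $R$-module. For $r\in P$, $D_r=\sum_{q<r}t^{\,r-q}M_q\subseteq M_r$; $x\in M_r$ is decomposable if $x\in D_r$. For each $i\in P$, fix an $R$-basis $\{m_j\}$ of $M_i$ and let $M_{\langle i\rangle}$ be the graded free $R[U_0]$-module with homogeneous basis $\{\widetilde m_j\}$, all of degree $i$. Let $q:\bigoplus_{i\in P}M_{\langle i\rangle}\to M$ be the graded homomorphism whose restriction to $M_{\langle i\rangle}$ sends $t^{s}\sum_j c_j\widetilde m_j\mapsto t^s\sum_jc_jm_j$ ($c_j\in R$); $q$ is surjective, so by projectivity there is a graded homomorphism $p$ with $q\circ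 p=\mathrm{id}_M$. All homomorphisms are degree-preserving. *)

theory Defs
  imports Complex_Main
begin

definition is_pid :: "'r::idom itself \<Rightarrow> bool" where
  "is_pid _ \<longleftrightarrow>
     (\<forall>I::'r set. (0 \<in> I \<and> (\<forall>x\<in>I. \<forall>y\<in>I. x + y \<in> I) \<and> (\<forall>a. \<forall>x\<in>I. a * x \<in> I))
        \<longrightarrow> (\<exists>g. I = {g * a | a. True}))"

text \<open>The R[U_0]-action is given
  by the R-scalar multiplication smul and the action tm s of the monomials t^s (s >= 0);
  Mc a is the homogeneous component M_a, and M is the internal direct sum of the M_a.\<close>
definition graded_RU0_module ::
  "('r::idom \<Rightarrow> 'm::ab_group_add \<Rightarrow> 'm) \<Rightarrow> ('p::{ordered_ab_group_add,lattice} \<Rightarrow> 'm \<Rightarrow> 'm)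
     \<Rightarrow> ('p \<Rightarrow> 'm set) \<Rightarrow> bool" where
  "graded_RU0_module smul tm Mc \<longleftrightarrow>
     module smul \<and>
     (\<forall>x. tm 0 x = x) \<and>
     (\<forall>s u x. 0 \<le> s \<longrightarrow> 0 \<le> u \<longrightarrow> tm (s + u) x = tm s (tm u x)) \<and>
     (\<forall>s x y. 0 \<le> s \<longrightarrow> tm s (x + y) = tm s x + tm s y) \<and>
     (\<forall>s c x. 0 \<le> s \<longrightarrow> tm s (smul c x) = smul c (tm s x)) \<and>
     (\<forall>a. module.subspace smul (Mc a)) \<and>
     (\<forall>a s x. 0 \<le> s \<longrightarrow> x \<in> Mc a \<longrightarrow> tm s x \<in> Mc (a + s)) \<and>
     (\<forall>x. \<exists>A f. finite A \<and> (\<forall>a\<in>A. f a \<in> Mc a) \<and> x = (\<Sum>a\<in>A. f a)) \<and>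
     (\<forall>A f. finite A \<longrightarrow> (\<forall>a\<in>A. f a \<in> Mc a) \<longrightarrow> (\<Sum>a\<in>A. f a) = 0 \<longrightarrow> (\<forall>a\<in>A. f a = 0))"

text \<open>Elements of the graded free module F = (direct sum over i of M_<i>), where M_<i> has
  homogeneous basis (tilde b) for b in the fixed R-basis bas i of M_i, all of degree i.
  An element c is represented by its R-coefficients: c i b s is the coefficient of
  t^s (tilde b) in the summand M_<i> (b \<in> bas i, s \<ge> 0); this has degree i + s.\<close>
definition free_elem :: "('p::ordered_ab_group_add \<Rightarrow> 'm set) \<Rightarrow> ('p \<Rightarrow> 'm \<Rightarrow> 'p \<Rightarrow> 'r::zero) \<Rightarrow> bool" where
  "free_elem bas c \<longleftrightarrow>
     finite {(i, b, s). c i b s \<noteq> 0} \<and> (\<forall>i b s. c i b s \<noteq> 0 \<longrightarrow> b \<in> bas i \<and> 0 \<le> s)"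

definition free_hom_deg :: "('p::ordered_ab_group_add \<Rightarrow> 'm set) \<Rightarrow> 'p \<Rightarrow> ('p \<Rightarrow> 'm \<Rightarrow> 'p \<Rightarrow> 'r::zero) \<Rightarrow> bool" where
  "free_hom_deg bas d c \<longleftrightarrow> free_elem bas c \<and> (\<forall>i b s. c i b s \<noteq> 0 \<longrightarrow> i + s = d)"

definition free_shift :: "'p::ordered_ab_group_add \<Rightarrow> ('p \<Rightarrow> 'm \<Rightarrow> 'p \<Rightarrow> 'r::zero) \<Rightarrow> ('p \<Rightarrow> 'm \<Rightarrow> 'p \<Rightarrow> 'r)" where
  "free_shift s c = (\<lambda>i b u. if s \<le> u then c i b (u - s) else 0)"

definition qmap :: "('r::idom \<Rightarrow> 'm::ab_group_add \<Rightarrow> 'm) \<Rightarrow> ('p \<Rightarrow> 'm \<Rightarrow> 'm)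
     \<Rightarrow> ('p \<Rightarrow> 'm \<Rightarrow> 'p \<Rightarrow> 'r) \<Rightarrow> 'm" where
  "qmap smul tm c = (\<Sum>(i, b, s) \<in> {(i, b, s). c i b s \<noteq> 0}. smul (c i b s) (tm s b))"

definition graded_hom_to_free ::
  "('r::idom \<Rightarrow> 'm::ab_group_add \<Rightarrow> 'm) \<Rightarrow> ('p::ordered_ab_group_add \<Rightarrow> 'm \<Rightarrow> 'm) \<Rightarrow> ('p \<Rightarrow> 'm set)
     \<Rightarrow> ('p \<Rightarrow> 'm set) \<Rightarrow> ('m \<Rightarrow> 'p \<Rightarrow> 'm \<Rightarrow> 'p \<Rightarrow> 'r) \<Rightarrow> bool" where
  "graded_hom_to_free smul tm Mc bas p \<longleftrightarrow>
     (\<forall>x. free_elem bas (p x)) \<and>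
     (\<forall>a x. x \<in> Mc a \<longrightarrow> free_hom_deg bas a (p x)) \<and>
     (\<forall>x y. p (x + y) = (\<lambda>i b s. p x i b s + p y i b s)) \<and>
     (\<forall>c x. p (smul c x) = (\<lambda>i b s. c * p x i b s)) \<and>
     (\<forall>s x. 0 \<le> s \<longrightarrow> p (tm s x) = free_shift s (p x))"

definition decomp_set :: "('p::ordered_ab_group_add \<Rightarrow> 'm::ab_group_add \<Rightarrow> 'm) \<Rightarrow> ('p \<Rightarrow> 'm set) \<Rightarrow> 'p \<Rightarrow> 'm set" where
  "decomp_set tm Mc r =
     {(\<Sum>q\<in>A. tm (r - q) (y q)) | A y. finite A \<and> (\<forall>q\<in>A. q < r \<and> y q \<in> Mc q)}"

end

theory Submission
  imports Defs
begin

text \<open>A graded homomorphism p commutes with the shifts t^s and preserves degrees, so for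
  y \<in> M_q the coefficients of p(t^s y) live in summands M_<i> with i \<le> q; summing over a
  decomposition of x \<in> D_k gives only summands with i < k.  Conversely, q \<circ> p = id writes x
  as the sum of the terms c_{i,b,s} t^s b with b \<in> M_i and i + s = k; collecting the terms
  with the same i, and using i < k, exhibits x as an element of D_k.\<close>

lemma graded_RU0_moduleD:
  assumes "graded_RU0_module smul tm Mc"
  shows "module smul" and "module.subspace smul (Mc a)"
    and "0 \<le> s \<Longrightarrow> tm s (x + y) = tm s x + tm s y"
    and "0 \<le> s \<Longrightarrow> tm s (smul c x) = smul c (tm s x)"
  using assms unfolding graded_RU0_module_def by simp_all

lemma graded_hom_to_freeD:
  assumes "graded_hom_to_free smul tm Mc bas p"
  shows "x \<in> Mc a \<Longrightarrow> free_hom_deg bas a (p x)"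
    and "p (x + y) = (\<lambda>i b s. p x i b s + p y i b s)"
    and "0 \<le> s \<Longrightarrow> p (tm s x) = free_shift s (p x)"
  using assms unfolding graded_hom_to_free_def by simp_all

lemma graded_RU0_module_shift_additive:
  assumes "graded_RU0_module smul tm Mc" and "0 \<le> s"
  shows "additive (tm s)"
  by unfold_locales (rule graded_RU0_moduleD(3)[OF assms])

lemma graded_hom_to_free_coeff_additive:
  assumes "graded_hom_to_free smul tm Mc bas p"
  shows "additive (\<lambda>x. p x i b s)"
  by unfold_locales (simp add: graded_hom_to_freeD(2)[OF assms])

lemma graded_hom_to_free_shift_coeff_le:
  assumes p: "graded_hom_to_free smul tm Mc bas p"
    and "y \<in> Mc q" and "0 \<le> s" and nz: "p (tm s y) i b u \<noteq> 0"
  shows "i \<le> q"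
proof -
  from nz have "p y i b (u - s) \<noteq> 0"
    by (simp add: graded_hom_to_freeD(3)[OF p \<open>0 \<le> s\<close>] free_shift_def split: if_splits)
  with graded_hom_to_freeD(1)[OF p \<open>y \<in> Mc q\<close>] have "i + (u - s) = q" and "0 \<le> u - s"
    unfolding free_hom_deg_def free_elem_def by blast+
  then show "i \<le> q"
    by (metis add_le_cancel_left add.right_neutral)
qed

lemma decomp_setI:
  assumes "finite A" and "\<And>q. q \<in> A \<Longrightarrow> q < r \<and> y q \<in> Mc q"
  shows "(\<Sum>q\<in>A. tm (r - q) (y q)) \<in> decomp_set tm Mc r"
  unfolding decomp_set_def using assms by blast

lemma graded_hom_to_free_decomp_coeff_less:
  assumes p: "graded_hom_to_free smul tm Mc bas p"
    and "x \<in> decomp_set tm Mc k" and nz: "p x i b u \<noteq> 0"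
  shows "i < k"
proof -
  obtain A y where A: "\<forall>q\<in>A. q < k \<and> y q \<in> Mc q"
    and x: "x = (\<Sum>q\<in>A. tm (k - q) (y q))"
    using assms(2) unfolding decomp_set_def by blast
  have "(\<Sum>q\<in>A. p (tm (k - q) (y q)) i b u) \<noteq> 0"
    using nz unfolding x additive.sum[OF graded_hom_to_free_coeff_additive[OF p]] .
  then obtain q where "q \<in> A" and nz_q: "p (tm (k - q) (y q)) i b u \<noteq> 0"
    by (meson sum.neutral)
  with A have "q < k" and "y q \<in> Mc q"
    by auto
  then have "i \<le> q"
    using graded_hom_to_free_shift_coeff_le[OF p _ _ nz_q] by simp
  with \<open>q < k\<close> show "i < k"
    by simp
qed

text \<open>The image under q of the M_<i>-summand of c with all shifts t^s dropped; if c is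
  homogeneous of degree k, q maps that summand to t^(k-i) of this element of M_i.\<close>

definition unshifted_component ::
  "('r \<Rightarrow> 'm \<Rightarrow> 'm::ab_group_add) \<Rightarrow> ('p \<Rightarrow> 'm \<Rightarrow> 'p \<Rightarrow> 'r::zero) \<Rightarrow> 'p \<Rightarrow> 'm" where
  "unshifted_component smul c i = (\<Sum>(b, s) \<in> {(b, s). c i b s \<noteq> 0}. smul (c i b s) b)"

lemma unshifted_component_mem:
  assumes M: "graded_RU0_module smul tm Mc"
    and bas: "bas i \<subseteq> Mc i"
    and c: "free_elem bas c"
  shows "unshifted_component smul c i \<in> Mc i"
  unfolding unshifted_component_def
proof (rule module.subspace_sum[OF graded_RU0_moduleD(1,2)[OF M]], clarify)
  fix b s assume "c i b s \<noteq> 0"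
  with c bas have "b \<in> Mc i"
    unfolding free_elem_def by blast
  then show "smul (c i b s) b \<in> Mc i"
    by (rule module.subspace_scale[OF graded_RU0_moduleD(1,2)[OF M]])
qed

lemma qmap_eq_sum_shifted_components:
  assumes M: "graded_RU0_module smul tm Mc"
    and c: "free_hom_deg bas k c"
  defines "S \<equiv> {(i, b, s). c i b s \<noteq> 0}"
  shows "qmap smul tm c = (\<Sum>i\<in>fst ` S. tm (k - i) (unshifted_component smul c i))"
proof -
  have "finite S" and S: "\<And>i b s. (i, b, s) \<in> S \<Longrightarrow> 0 \<le> s \<and> i + s = k"
    using c unfolding S_def free_hom_deg_def free_elem_def by blast+
  define f where "f = (\<lambda>(i, b, s). smul (c i b s) (tm s b))"
  have component: "sum f {z \<in> S. fst z = i} = tm (k - i) (unshifted_component smul c i)"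
    if "i \<in> fst ` S" for i
  proof -
    have fibre: "{z \<in> S. fst z = i} = Pair i ` {(b, s). c i b s \<noteq> 0}"
      by (auto simp: S_def)
    have shift: "s = k - i" and shift_nonneg: "0 \<le> k - i" if "c i b s \<noteq> 0" for b s
      using S[of i b s] that by (auto simp: S_def eq_diff_eq add.commute)
    from \<open>i \<in> fst ` S\<close> obtain b s where "c i b s \<noteq> 0"
      by (auto simp: S_def)
    then have "0 \<le> k - i"
      by (rule shift_nonneg)
    have "sum f {z \<in> S. fst z = i} = (\<Sum>(b, s) \<in> {(b, s). c i b s \<noteq> 0}. smul (c i b s) (tm s b))"
      unfolding fibre by (subst sum.reindex) (auto simp: inj_on_def f_def case_prod_beta)
    also have "\<dots> = (\<Sum>(b, s) \<in> {(b, s). c i b s \<noteq> 0}. tm (k - i) (smul (c i b s) b))"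
      using shift \<open>0 \<le> k - i\<close> by (intro sum.cong) (auto simp: graded_RU0_moduleD(4)[OF M])
    also have "\<dots> = tm (k - i) (unshifted_component smul c i)"
      unfolding unshifted_component_def
      by (simp add: additive.sum[OF graded_RU0_module_shift_additive[OF M \<open>0 \<le> k - i\<close>]] case_prod_beta)
    finally show ?thesis .
  qed
  have "qmap smul tm c = sum f S"
    by (simp add: qmap_def S_def f_def)
  also have "\<dots> = (\<Sum>i\<in>fst ` S. sum f {z \<in> S. fst z = i})"
    using sum.image_gen[OF \<open>finite S\<close>] .
  also have "\<dots> = (\<Sum>i\<in>fst ` S. tm (k - i) (unshifted_component smul c i))"
    using component by (rule sum.cong[OF refl])
  finally show ?thesis .
qed

lemma qmap_in_decomp_set:
  assumes M: "graded_RU0_module smul tm Mc"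
    and bas: "\<And>i. bas i \<subseteq> Mc i"
    and c: "free_hom_deg bas k c"
    and below: "\<And>i b s. c i b s \<noteq> 0 \<Longrightarrow> i < k"
  shows "qmap smul tm c \<in> decomp_set tm Mc k"
proof -
  define S where "S \<equiv> {(i, b, s). c i b s \<noteq> 0}"
  have "finite (fst ` S)"
    using c unfolding S_def free_hom_deg_def free_elem_def by blast
  moreover have "i < k \<and> unshifted_component smul c i \<in> Mc i" if "i \<in> fst ` S" for i
  proof
    show "i < k"
      using that below by (auto simp: S_def)
    show "unshifted_component smul c i \<in> Mc i"
      using c unshifted_component_mem[of smul tm Mc bas i c, OF M bas]
      by (simp add: free_hom_deg_def)
  qed
  ultimately have "(\<Sum>i\<in>fst ` S. tm (k - i) (unshifted_component smul c i)) \<in> decomp_set tm Mc k"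
    by (rule decomp_setI)
  then show ?thesis
    unfolding S_def qmap_eq_sum_shifted_components[OF M c] .
qed

theorem lemma4p3:
  fixes smul :: "'r::idom \<Rightarrow> 'm::ab_group_add \<Rightarrow> 'm"
    and tm :: "'p::{ordered_ab_group_add,lattice} \<Rightarrow> 'm \<Rightarrow> 'm"
    and Mc :: "'p \<Rightarrow> 'm set"
    and bas :: "'p \<Rightarrow> 'm set"
    and p :: "'m \<Rightarrow> 'p \<Rightarrow> 'm \<Rightarrow> 'p \<Rightarrow> 'r"
    and k :: 'p and x :: 'm
  assumes "is_pid TYPE('r)"
    and "graded_RU0_module smul tm Mc"
    and "\<forall>i. finite (bas i) \<and> \<not> module.dependent smul (bas i) \<and> module.span smul (bas i) = Mc i"
    and "graded_hom_to_free smul tm Mc bas p"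
    and "\<forall>y. qmap smul tm (p y) = y"
    and "x \<in> Mc k"
  shows "x \<in> decomp_set tm Mc k \<longleftrightarrow> (\<forall>i. p x i \<noteq> (\<lambda>b s. 0) \<longrightarrow> i < k)"
proof
  assume x: "x \<in> decomp_set tm Mc k"
  show "\<forall>i. p x i \<noteq> (\<lambda>b s. 0) \<longrightarrow> i < k"
  proof (intro allI impI)
    fix i assume "p x i \<noteq> (\<lambda>b s. 0)"
    then obtain b u where "p x i b u \<noteq> 0"
      by fastforce
    with x show "i < k"
      by (rule graded_hom_to_free_decomp_coeff_less[OF assms(4)])
  qed
next
  assume below: "\<forall>i. p x i \<noteq> (\<lambda>b s. 0) \<longrightarrow> i < k"
  have "bas i \<subseteq> Mc i" for i
    using module.span_superset[OF graded_RU0_moduleD(1)[OF assms(2)]] assms(3) by blast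
  moreover have "i < k" if "p x i b s \<noteq> 0" for i b s
  proof -
    from that have "p x i \<noteq> (\<lambda>b s. 0)"
      by auto
    with below show "i < k"
      by blast
  qed
  ultimately have "qmap smul tm (p x) \<in> decomp_set tm Mc k"
    using graded_hom_to_freeD(1)[OF assms(4,6)] by (intro qmap_in_decomp_set[OF assms(2)])
  then show "x \<in> decomp_set tm Mc k"
    using assms(5) by simp
qed

end
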